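(* Let $V_1,\dots,V_{15}$ be the orbits of $L$ on $V(G_{E_8})$. For each $i$, choose a vector $w_i\in\Psi_{E_8}$ with $v_{w_i}\in V_i$. For $x\in\Psi_{E_8}$ let $P_x=\frac{1}{\|x\|^2}xx^*\in M_8(\mathbb{C})$ be the rank-one projection onto $\mathbb{C}x$. For $v_y,v_z\in V_i$ choose $M_{yz}=M_1\otimes M_2\otimes M_3$ with $M_k\in\{I,X,Y,Z\}$ such that $M_{yz}y=\pm z$ (which exists since $v_y,v_z$ lie in the same $L$-orbit), and set $u^{(i)}_{v_yv_z}:=M_{yz}P_{w_i}M_{yz}^*=P_{M_{yz}w_i}$. Let $u$ be the $120\times120$ matrix with entries in $M_8(\mathbb{C})$ that is block diagonal with respect to the partition $V_1,\dots,V_{15}$, with diagonal blocks $u^{(i)}=(u^{(i)}_{v_yv_z})_{v_y,v_z\in V_i}$ and all other entries $0$. Then $u$ is a quantum permutation matrix.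
   Context: The $E_8$ root system $\Psi_{E_8}\subset\mathbb{R}^8$ consists of the 240 vectors $\pm e_i\pm e_j$ ($1\le i<j\le 8$) and all $x\in\{\pm1\}^8$ with $\prod_i x_i=1$. $G_{E_8}$ is the graph with vertices $v_x$, $x\in\Psi_{E_8}$, where $v_x=v_{-x}$, and $v_x\sim v_y$ iff $\langle x,y\rangle=0$. Let $I=\mathrm{diag}(1,1)$, $X=\begin{pmatrix}0&1\\1&0\end{pmatrix}$, $Z=\mathrm{diag}(1,-1)$, $Y=XZ$. For $M=M_1\otimes M_2\otimes M_3$ with $M_i\in\{I,X,Y,Z\}$, $\sigma_M:v_x\mapsto v_{Mx}$ is an automorphism of $G_{E_8}$ and $L=\{\sigma_M\}\cong\mathbb{Z}_2^6$; $L$ has 15 orbits on $V(G_{E_8})$, each of size 8. A quantum permutation matrix (magic unitary) over a unital $C^*$-algebra $\mathcal{A}$ is a matrix $u=(u_{ij})\in M_n(\mathcal{A})$ whose entries are projections ($u_{ij}=u_{ij}^*=u_{ij}^2$) with $\sum_k u_{ik}=1_{\mathcal{A}}=\sum_k u_{ki}$ for all $i$. Here $\mathcal{A}=M_8(\mathbb{C})$. *)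

theory Defs
  imports "HOL-Analysis.Analysis"
begin

text \<open>Coordinates of R^8 are indexed by the type 8; the element with
representative k (0 \<le> k < 8) is the basis direction e_(k+1).
In the Kronecker product M1 (x) M2 (x) M3 the index k corresponds to
the binary digits (k div 4, (k div 2) mod 2, k mod 2).\<close>

definition idx8 :: "8 \<Rightarrow> int" where "idx8 i = Rep_bit0 i"

definition dig1 :: "8 \<Rightarrow> 2" where "dig1 i = of_int (idx8 i div 4)"
definition dig2 :: "8 \<Rightarrow> 2" where "dig2 i = of_int ((idx8 i div 2) mod 2)"
definition dig3 :: "8 \<Rightarrow> 2" where "dig3 i = of_int (idx8 i mod 2)"

definition kron3 :: "real^2^2 \<Rightarrow> real^2^2 \<Rightarrow> real^2^2 \<Rightarrow> real^8^8" where
  "kron3 A B C = (\<chi> i j. A $ dig1 i $ dig1 j * B $ dig2 i $ dig2 j * C $ dig3 i $ dig3 j)"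

definition PauliI :: "real^2^2" where "PauliI = mat 1"
definition PauliX :: "real^2^2" where "PauliX = (\<chi> i j. if i = j then 0 else 1)"
definition PauliZ :: "real^2^2" where "PauliZ = (\<chi> i j. if i = j then (if i = 0 then 1 else -1) else 0)"
definition PauliY :: "real^2^2" where "PauliY = PauliX ** PauliZ"

definition Pauli3 :: "(real^8^8) set" where
  "Pauli3 = {kron3 A B C | A B C. A \<in> {PauliI, PauliX, PauliY, PauliZ}
                              \<and> B \<in> {PauliI, PauliX, PauliY, PauliZ}
                              \<and> C \<in> {PauliI, PauliX, PauliY, PauliZ}}"

definition E8_roots :: "(real^8) set" where
  "E8_roots =
     {x. \<exists>i j s t. i \<noteq> j \<and> s \<in> {1, -1} \<and> t \<in> {1, -1} \<and> x = s *\<^sub>R axis i 1 + t *\<^sub>R axis j 1}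
   \<union> {x. (\<forall>i. x $ i \<in> {1, -1}) \<and> (\<Prod>i\<in>UNIV. x $ i) = 1}"

text \<open>Vertices of G_E8: v_x = v_(-x), represented as the pair {x, -x}.\<close>
definition vert :: "real^8 \<Rightarrow> (real^8) set" where "vert x = {x, -x}"

definition E8_vertices :: "(real^8) set set" where "E8_vertices = vert ` E8_roots"

definition sigma :: "real^8^8 \<Rightarrow> (real^8) set \<Rightarrow> (real^8) set" where
  "sigma M v = (\<lambda>x. M *v x) ` v"

definition L_orbit :: "(real^8) set \<Rightarrow> (real^8) set set" where
  "L_orbit v = {sigma M v | M. M \<in> Pauli3}"

definition L_orbits :: "(real^8) set set set" where
  "L_orbits = L_orbit ` E8_vertices"

definition projC :: "real^8 \<Rightarrow> complex^8^8" where
  "projC x = (\<chi> i j. complex_of_real (x $ i * x $ j / (norm x)^2))"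

definition adjointC :: "complex^'n^'n \<Rightarrow> complex^'n^'n" where
  "adjointC A = (\<chi> i j. cnj (A $ j $ i))"

definition is_projection :: "complex^'n^'n \<Rightarrow> bool" where
  "is_projection p \<longleftrightarrow> adjointC p = p \<and> p ** p = p"

definition quantum_permutation_matrix ::
    "'v set \<Rightarrow> ('v \<Rightarrow> 'v \<Rightarrow> complex^'n^'n) \<Rightarrow> bool" where
  "quantum_permutation_matrix V u \<longleftrightarrow>
     (\<forall>i\<in>V. \<forall>j\<in>V. is_projection (u i j)) \<and>
     (\<forall>i\<in>V. (\<Sum>k\<in>V. u i k) = mat 1) \<and>
     (\<forall>i\<in>V. (\<Sum>k\<in>V. u k i) = mat 1)"

end

theory Submission
  imports Defs
begin

(* Up to sign, every matrix in Pauli3 is a Weyl operator Z^b X^a of (Z/2)^3, acting on R^8 by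
   (weyl a b v)_i = chi_b(i) v_(i xor a). Hence the L-orbit of a vertex v_y is {v_(weyl a b y)},
   and since Weyl operators commute and square to the identity up to sign, a fixed Weyl operator
   permutes the vertices of each orbit. For a root y, weyl a b y is either +-y or orthogonal to y:
   for y = +-e_p +- e_q this is a direct check, and for y in {1,-1}^8 with product 1 the inner
   product sum_i chi_b(i) y_i y_(i xor a) is 0 or +-8, because the second differences
   y_i y_(i xor a) y_(i xor c) y_(i xor a xor c) do not depend on i. So the vertices of an orbit are
   pairwise orthogonal; as the characters chi_b separate coordinates, the orbit of a nonzero vector
   spans R^8, and the projections onto the vertices of an orbit sum to 1. In every row and every
   column of u the nonzero entries are exactly these projections, permuted by a Weyl operator. *)

section \<open>The index set as (Z/2)^3\<close>

lemma exhaust_8: "(i::8) = 0 \<or> i = 1 \<or> i = 2 \<or> i = 3 \<or> i = 4 \<or> i = 5 \<or> i = 6 \<or> i = 7"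
proof -
  have r: "0 \<le> Rep_bit0 i" "Rep_bit0 i < 8"
    using Rep_bit0[of i] by simp_all
  then have i: "i = of_int (Rep_bit0 i)"
    by (simp add: bit0.of_int_eq Rep_bit0_inverse)
  from r have "Rep_bit0 i \<in> {0, 1, 2, 3, 4, 5, 6, 7}"
    by simp presburger
  then show ?thesis
    by (subst (1 2 3 4 5 6 7 8) i) auto
qed

lemma two_eq_zero [simp]: "(2::2) = 0"
  by simp

lemma exhaust_bit: "(x::2) = 0 \<or> x = 1"
  using exhaust_2[of x] by auto

lemma forall_bit: "(\<forall>x::2. P x) \<longleftrightarrow> P 0 \<and> P 1"
  by (metis exhaust_bit)

lemma UNIV_bit: "(UNIV::2 set) = {0, 1}"
  using exhaust_bit by auto

definition index_bits :: "8 \<Rightarrow> 2 \<times> 2 \<times> 2" where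
  "index_bits i = (dig1 i, dig2 i, dig3 i)"

lemma index_bits_0 [simp]: "index_bits 0 = 0"
  by (simp add: index_bits_def dig1_def dig2_def dig3_def idx8_def bit0.Rep_0 prod_eq_iff)

lemma index_bits_numeral [simp]:
  "index_bits 1 = (0, 0, 1)" "index_bits 2 = (0, 1, 0)" "index_bits 3 = (0, 1, 1)"
  "index_bits 4 = (1, 0, 0)" "index_bits 5 = (1, 0, 1)" "index_bits 6 = (1, 1, 0)"
  "index_bits 7 = (1, 1, 1)"
  by (simp_all add: index_bits_def dig1_def dig2_def dig3_def idx8_def bit0.Rep_numeral bit0.Rep_1)

lemma zero_bits_eq: "(0::2 \<times> 2 \<times> 2) = (0, 0, 0)"
  by (simp add: prod_eq_iff)

lemma bij_index_bits: "bij index_bits"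
proof -
  have "t \<in> range index_bits" for t
  proof -
    obtain a b c where t: "t = (a, b, c)"
      by (cases t) auto
    show ?thesis
      using exhaust_bit[of a] exhaust_bit[of b] exhaust_bit[of c] unfolding t
      by (elim disjE) (metis rangeI index_bits_numeral index_bits_0 zero_bits_eq)+
  qed
  then have surj: "surj index_bits"
    by blast
  then have "inj index_bits"
    by (intro eq_card_imp_inj_on) (simp_all add: card_UNIV_length_enum)
  with surj show ?thesis
    by (simp add: bij_def)
qed

lemma index_bits_inject: "index_bits i = index_bits j \<longleftrightarrow> i = j"
  using bij_index_bits by (auto dest: bij_is_inj injD)

lemma index_bits_inv: "index_bits (inv index_bits t) = t"
  by (meson bij_index_bits bij_inv_eq_iff)

lemma bits_add_self: "(t::2 \<times> 2 \<times> 2) + t = 0"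
proof -
  have "(x::2) + x = 0" for x
    using exhaust_bit[of x] by auto
  then show ?thesis
    by (simp add: plus_prod_def zero_prod_def)
qed

definition bxor :: "8 \<Rightarrow> 8 \<Rightarrow> 8" (infixl "\<oplus>" 65) where
  "i \<oplus> j = inv index_bits (index_bits i + index_bits j)"

lemma index_bits_bxor: "index_bits (i \<oplus> j) = index_bits i + index_bits j"
  by (simp add: bxor_def index_bits_inv)

lemma bxor_commute: "i \<oplus> j = j \<oplus> i"
  by (simp add: index_bits_inject[symmetric] index_bits_bxor add.commute)

lemma bxor_assoc: "i \<oplus> j \<oplus> k = i \<oplus> (j \<oplus> k)"
  by (simp add: index_bits_inject[symmetric] index_bits_bxor add.assoc)

lemma bxor_left_commute: "i \<oplus> (j \<oplus> k) = j \<oplus> (i \<oplus> k)"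
  by (metis bxor_assoc bxor_commute)

lemmas bxor_ac = bxor_assoc bxor_commute bxor_left_commute

lemma bxor_0 [simp]: "i \<oplus> 0 = i" "0 \<oplus> i = i"
  by (simp_all add: index_bits_inject[symmetric] index_bits_bxor)

lemma bxor_self [simp]: "i \<oplus> i = 0"
  by (simp add: index_bits_inject[symmetric] index_bits_bxor bits_add_self)

lemma bxor_cancel [simp]: "i \<oplus> a \<oplus> a = i"
  by (simp add: bxor_assoc)

lemma bxor_self_left [simp]: "i \<oplus> (i \<oplus> j) = j"
  by (simp add: bxor_assoc[symmetric])

lemma bxor_eq_iff: "i \<oplus> a = j \<longleftrightarrow> i = j \<oplus> a"
  by auto

lemma bxor_fixed_iff [simp]: "i \<oplus> a = i \<longleftrightarrow> a = 0"
  by (metis bxor_0(1) bxor_assoc bxor_self)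

lemma bxor_fixed_iff' [simp]: "i = i \<oplus> a \<longleftrightarrow> a = 0"
  by (metis bxor_fixed_iff)

lemma bij_bxor: "bij (\<lambda>i. i \<oplus> a)"
  by (rule o_bij[of "\<lambda>i. i \<oplus> a"]) (simp_all add: fun_eq_iff)

lemma inj_on_bxor: "inj_on (\<lambda>h. j \<oplus> h) A"
  by (rule inj_onI) (metis bxor_self_left)

lemma distinct_8: "distinct [0, 1, 2, 3, 4, 5, 6, 7 :: 8]"
  unfolding distinct.simps set_simps
  by (smt (verit) index_bits_numeral index_bits_0 zero_bits_eq insert_iff empty_iff prod.inject
      zero_neq_one)

lemma sum_UNIV_8:
  fixes f :: "8 \<Rightarrow> 'a::comm_monoid_add"
  shows "(\<Sum>i\<in>UNIV. f i) = f 0 + f 1 + f 2 + f 3 + f 4 + f 5 + f 6 + f 7"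
proof -
  have U: "(UNIV::8 set) = set [0, 1, 2, 3, 4, 5, 6, 7]"
    using exhaust_8 by auto
  show ?thesis
    unfolding U sum.distinct_set_conv_list[OF distinct_8] by (simp add: add.assoc)
qed

lemma prod_UNIV_8:
  fixes f :: "8 \<Rightarrow> 'a::comm_monoid_mult"
  shows "(\<Prod>i\<in>UNIV. f i) = f 0 * f 1 * f 2 * f 3 * f 4 * f 5 * f 6 * f 7"
proof -
  have U: "(UNIV::8 set) = set [0, 1, 2, 3, 4, 5, 6, 7]"
    using exhaust_8 by auto
  show ?thesis
    unfolding U prod.distinct_set_conv_list[OF distinct_8] by (simp add: mult.assoc)
qed

lemma sign_mult: "s \<in> {1, -1::real} \<Longrightarrow> t \<in> {1, -1} \<Longrightarrow> s * t \<in> {1, -1}"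
  by auto

lemma prod_sign:
  assumes "finite A" "\<And>a. a \<in> A \<Longrightarrow> f a \<in> {1, -1::real}"
  shows "prod f A \<in> {1, -1}"
  using assms
proof (induction A rule: finite_induct)
  case (insert a A)
  then have "f a \<in> {1, -1}" "prod f A \<in> {1, -1}"
    by simp_all
  then show ?case
    unfolding prod.insert[OF insert(1,2)] by (rule sign_mult)
qed simp

definition minus_one_pow :: "2 \<Rightarrow> real" where
  "minus_one_pow x = (if x = 0 then 1 else -1)"

lemma minus_one_pow_simps [simp]: "minus_one_pow 0 = 1" "minus_one_pow 1 = -1"
  by (simp_all add: minus_one_pow_def)

lemma minus_one_pow_add: "minus_one_pow (x + y) = minus_one_pow x * minus_one_pow y"
  using exhaust_bit[of x] exhaust_bit[of y] by auto

definition bits_dot :: "2 \<times> 2 \<times> 2 \<Rightarrow> 2 \<times> 2 \<times> 2 \<Rightarrow> 2" where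
  "bits_dot s t = fst s * fst t + fst (snd s) * fst (snd t) + snd (snd s) * snd (snd t)"

definition chi :: "8 \<Rightarrow> 8 \<Rightarrow> real" where
  "chi b i = minus_one_pow (bits_dot (index_bits b) (index_bits i))"

lemma chi_bxor: "chi b (i \<oplus> j) = chi b i * chi b j"
  by (simp add: chi_def index_bits_bxor bits_dot_def distrib_left add_ac minus_one_pow_add[symmetric])

lemma chi_commute: "chi b i = chi i b"
  by (simp add: chi_def bits_dot_def mult.commute)

lemma chi_bxor_left: "chi (b \<oplus> c) i = chi b i * chi c i"
  by (metis chi_bxor chi_commute)

lemma chi_sign: "chi b i \<in> {1, -1}"
  by (simp add: chi_def minus_one_pow_def)

lemma chi_mult_self [simp]: "chi b i * chi b i = 1" "chi b i * (chi b i * x) = x"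
  using chi_sign[of b i] by auto

lemma chi_0 [simp]: "chi 0 i = 1" "chi b 0 = 1"
  by (simp_all add: chi_def bits_dot_def)

lemma sum_chi: "(\<Sum>b\<in>UNIV. chi b c) = (if c = 0 then 8 else 0)"
  using exhaust_8[of c] by (auto simp: sum_UNIV_8 chi_def bits_dot_def)

lemma prod_chi: "(\<Prod>i\<in>UNIV. chi b i) = 1"
  using exhaust_8[of b] by (auto simp: prod_UNIV_8 chi_def bits_dot_def)

section \<open>Weyl operators\<close>

definition weyl :: "8 \<Rightarrow> 8 \<Rightarrow> real^8^8" where
  "weyl a b = (\<chi> i j. chi b i * (if j = i \<oplus> a then 1 else 0))"

lemma weyl_mult_vec_nth [simp]: "(weyl a b *v v) $ i = chi b i * v $ (i \<oplus> a)"
proof -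
  have "(weyl a b *v v) $ i = (\<Sum>j\<in>UNIV. chi b i * (if j = i \<oplus> a then 1 else 0) * v $ j)"
    by (simp add: weyl_def matrix_vector_mult_def)
  also have "\<dots> = (\<Sum>j\<in>UNIV. if j = i \<oplus> a then chi b i * v $ j else 0)"
    by (rule sum.cong) auto
  finally show ?thesis
    by simp
qed

lemma weyl_weyl: "weyl a b *v (weyl a' b' *v v) = chi b' a *\<^sub>R (weyl (a \<oplus> a') (b \<oplus> b') *v v)"
  by (simp add: vec_eq_iff chi_bxor chi_bxor_left bxor_assoc)

lemma weyl_weyl_self: "weyl a b *v (weyl a b *v v) = chi b a *\<^sub>R v"
  by (simp add: weyl_weyl vec_eq_iff)

lemma inner_weyl: "inner (weyl a b *v x) (weyl a b *v y) = inner x y"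
proof -
  have "inner (weyl a b *v x) (weyl a b *v y) = (\<Sum>i\<in>UNIV. x $ (i \<oplus> a) * y $ (i \<oplus> a))"
    by (simp add: inner_vec_def algebra_simps)
  also have "\<dots> = inner x y"
    using sum.reindex_bij_betw[OF bij_bxor, of "\<lambda>i. x $ i * y $ i"] by (simp add: inner_vec_def)
  finally show ?thesis .
qed

lemma norm_weyl: "norm (weyl a b *v x) = norm x"
  by (simp add: norm_eq_sqrt_inner inner_weyl)

lemma span_weyl_orbit:
  assumes "y \<noteq> 0"
  shows "span {weyl a b *v y | a b. True} = UNIV"
proof -
  obtain k where k: "y $ k \<noteq> 0"
    using assms by (auto simp: vec_eq_iff)
  have "axis i 1 \<in> span {weyl a b *v y | a b. True}" for i
  proof -
    define v where "v = (\<Sum>b\<in>UNIV. chi b i *\<^sub>R (weyl (i \<oplus> k) b *v y))"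
    have "v $ l = (\<Sum>b\<in>UNIV. chi b (i \<oplus> l)) * y $ (l \<oplus> (i \<oplus> k))" for l
      by (simp add: v_def chi_bxor sum_distrib_right mult.assoc)
    then have "v $ l = ((8 * y $ k) *\<^sub>R axis i 1) $ l" for l
      by (simp add: sum_chi axis_def bxor_eq_iff)
    then have "axis i 1 = inverse (8 * y $ k) *\<^sub>R v"
      using k by (simp add: vec_eq_iff)
    moreover have "v \<in> span {weyl a b *v y | a b. True}"
      unfolding v_def by (intro span_sum span_scale span_base) blast
    ultimately show ?thesis
      by (simp add: span_scale)
  qed
  then have "Basis \<subseteq> span {weyl a b *v y | a b. True}"
    by (auto simp: Basis_vec_def)
  then have "span Basis \<subseteq> span {weyl a b *v y | a b. True}"
    by (rule span_minimal) (rule subspace_span)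
  then show ?thesis
    by auto
qed

section \<open>The Pauli matrices as signed Weyl operators\<close>

definition weyl2 :: "2 \<Rightarrow> 2 \<Rightarrow> real^2^2" where
  "weyl2 a b = (\<chi> i j. minus_one_pow (b * i) * (if j = i + a then 1 else 0))"

lemma Pauli_weyl2:
  "PauliI = weyl2 0 0" "PauliX = weyl2 1 0" "PauliZ = weyl2 0 1" "PauliY = - weyl2 1 1"
  by (simp_all add: vec_eq_iff forall_bit weyl2_def PauliI_def PauliX_def PauliZ_def PauliY_def
      mat_def matrix_matrix_mult_def UNIV_bit)

lemma kron3_weyl2:
  "kron3 (weyl2 a1 b1) (weyl2 a2 b2) (weyl2 a3 b3) =
     weyl (inv index_bits (a1, a2, a3)) (inv index_bits (b1, b2, b3))"
proof -
  have "j = i \<oplus> inv index_bits (a1, a2, a3) \<longleftrightarrow>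
      dig1 j = dig1 i + a1 \<and> dig2 j = dig2 i + a2 \<and> dig3 j = dig3 i + a3" for i j
    by (simp add: index_bits_inject[symmetric] index_bits_bxor index_bits_inv)
      (simp add: index_bits_def)
  moreover have "chi (inv index_bits (b1, b2, b3)) i =
      minus_one_pow (b1 * dig1 i) * minus_one_pow (b2 * dig2 i) * minus_one_pow (b3 * dig3 i)" for i
    by (simp only: chi_def index_bits_inv) (simp add: bits_dot_def index_bits_def minus_one_pow_add)
  ultimately show ?thesis
    by (simp add: vec_eq_iff kron3_def weyl_def weyl2_def)
qed

lemma kron3_scaleR: "kron3 (c1 *\<^sub>R A) (c2 *\<^sub>R B) (c3 *\<^sub>R C) = (c1 * c2 * c3) *\<^sub>R kron3 A B C"
  by (simp add: vec_eq_iff kron3_def ac_simps)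

lemma Pauli2_weyl2:
  assumes "P \<in> {PauliI, PauliX, PauliY, PauliZ}"
  shows "\<exists>\<sigma>\<in>{1, -1}. \<exists>a b. P = \<sigma> *\<^sub>R weyl2 a b"
  using assms unfolding Pauli_weyl2
  by (metis empty_iff insertE insertI1 insertI2 scaleR_minus1_left scaleR_one)

lemma weyl2_Pauli2: "\<exists>\<sigma>\<in>{1, -1}. \<sigma> *\<^sub>R weyl2 a b \<in> {PauliI, PauliX, PauliY, PauliZ}"
  using exhaust_bit[of a] exhaust_bit[of b] unfolding Pauli_weyl2
  by (elim disjE) (metis insertI1 insertI2 scaleR_minus1_left scaleR_one)+

lemma Pauli3_weyl:
  assumes "M \<in> Pauli3"
  shows "\<exists>\<sigma>\<in>{1, -1}. \<exists>a b. M = \<sigma> *\<^sub>R weyl a b"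
proof -
  obtain A B C where M: "M = kron3 A B C"
    and ABC: "A \<in> {PauliI, PauliX, PauliY, PauliZ}" "B \<in> {PauliI, PauliX, PauliY, PauliZ}"
      "C \<in> {PauliI, PauliX, PauliY, PauliZ}"
    using assms unfolding Pauli3_def by blast
  obtain \<sigma>1 a1 b1 \<sigma>2 a2 b2 \<sigma>3 a3 b3 where "\<sigma>1 \<in> {1, -1}" "A = \<sigma>1 *\<^sub>R weyl2 a1 b1"
    "\<sigma>2 \<in> {1, -1}" "B = \<sigma>2 *\<^sub>R weyl2 a2 b2" "\<sigma>3 \<in> {1, -1}" "C = \<sigma>3 *\<^sub>R weyl2 a3 b3"
    using Pauli2_weyl2 ABC by metis
  then have "M = (\<sigma>1 * \<sigma>2 * \<sigma>3) *\<^sub>R weyl (inv index_bits (a1, a2, a3)) (inv index_bits (b1, b2, b3))"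
    and "\<sigma>1 * \<sigma>2 * \<sigma>3 \<in> {1, -1}"
    by (auto simp: M kron3_scaleR kron3_weyl2)
  then show ?thesis
    by blast
qed

lemma weyl_Pauli3: "\<exists>\<sigma>\<in>{1, -1}. \<sigma> *\<^sub>R weyl a b \<in> Pauli3"
proof -
  obtain a1 a2 a3 b1 b2 b3 where "index_bits a = (a1, a2, a3)" "index_bits b = (b1, b2, b3)"
    by (metis prod_cases3)
  then have ab: "a = inv index_bits (a1, a2, a3)" "b = inv index_bits (b1, b2, b3)"
    by (metis bij_index_bits bij_is_inj inv_f_f)+
  obtain \<sigma>1 \<sigma>2 \<sigma>3 where \<sigma>: "\<sigma>1 \<in> {1, -1}" "\<sigma>2 \<in> {1, -1}" "\<sigma>3 \<in> {1, -1}"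
    and P: "\<sigma>1 *\<^sub>R weyl2 a1 b1 \<in> {PauliI, PauliX, PauliY, PauliZ}"
      "\<sigma>2 *\<^sub>R weyl2 a2 b2 \<in> {PauliI, PauliX, PauliY, PauliZ}"
      "\<sigma>3 *\<^sub>R weyl2 a3 b3 \<in> {PauliI, PauliX, PauliY, PauliZ}"
    using weyl2_Pauli2 by metis
  have "kron3 (\<sigma>1 *\<^sub>R weyl2 a1 b1) (\<sigma>2 *\<^sub>R weyl2 a2 b2) (\<sigma>3 *\<^sub>R weyl2 a3 b3) \<in> Pauli3"
    using P unfolding Pauli3_def by blast
  moreover have "kron3 (\<sigma>1 *\<^sub>R weyl2 a1 b1) (\<sigma>2 *\<^sub>R weyl2 a2 b2) (\<sigma>3 *\<^sub>R weyl2 a3 b3) =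
      (\<sigma>1 * \<sigma>2 * \<sigma>3) *\<^sub>R weyl a b"
    by (simp add: kron3_scaleR kron3_weyl2 ab)
  moreover have "\<sigma>1 * \<sigma>2 * \<sigma>3 \<in> {1, -1}"
    using \<sigma> by auto
  ultimately show ?thesis
    by metis
qed

lemma vert_eq_iff: "vert x = vert y \<longleftrightarrow> x = y \<or> x = - y"
  by (auto simp: vert_def doubleton_eq_iff)

lemma vert_sign: "c \<in> {1, -1} \<Longrightarrow> vert (c *\<^sub>R x) = vert x"
  by (auto simp: vert_eq_iff)

lemma vert_chi: "vert (chi b a *\<^sub>R x) = vert x"
  using chi_sign vert_sign by blast

lemma matrix_vector_mult_uminus:
  fixes M :: "real^'n^'m"
  shows "M *v (- x) = - (M *v x)" "(- M) *v x = - (M *v x)"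
  by (simp_all add: vec_eq_iff matrix_vector_mult_def sum_negf)

lemma vert_matrix_vector_mult: "vert x = vert y \<Longrightarrow> vert (M *v x) = vert (M *v y)"
  by (auto simp: vert_eq_iff matrix_vector_mult_uminus)

lemma sigma_vert: "sigma M (vert x) = vert (M *v x)"
  by (simp add: sigma_def vert_def matrix_vector_mult_uminus)

lemma vert_weyl_weyl: "vert (weyl a b *v (weyl a' b' *v x)) = vert (weyl (a \<oplus> a') (b \<oplus> b') *v x)"
  by (simp add: weyl_weyl vert_chi)

lemma vert_weyl_commute: "vert (weyl a b *v (weyl a' b' *v x)) = vert (weyl a' b' *v (weyl a b *v x))"
  by (simp add: vert_weyl_weyl bxor_commute)

lemma vert_weyl_inject: "vert (weyl a b *v x) = vert (weyl a b *v y) \<longleftrightarrow> vert x = vert y"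
proof
  assume "vert (weyl a b *v x) = vert (weyl a b *v y)"
  then have "vert (weyl a b *v (weyl a b *v x)) = vert (weyl a b *v (weyl a b *v y))"
    by (rule vert_matrix_vector_mult)
  then show "vert x = vert y"
    by (simp add: weyl_weyl_self vert_chi)
qed (rule vert_matrix_vector_mult)

lemma Pauli3_vert_weyl:
  assumes "M \<in> Pauli3"
  obtains a b where "\<And>x. vert (M *v x) = vert (weyl a b *v x)"
  using Pauli3_weyl[OF assms] by (metis scaleR_matrix_vector_assoc vert_sign)

lemma Pauli3_vert_swap:
  assumes "M \<in> Pauli3" "vert (M *v y) = vert z"
  shows "vert (M *v z) = vert y"
proof -
  obtain a b where ab: "\<And>x. vert (M *v x) = vert (weyl a b *v x)"
    using Pauli3_vert_weyl[OF assms(1)] by blast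
  have "vert (weyl a b *v z) = vert (weyl a b *v (weyl a b *v y))"
    using assms(2) ab by (metis vert_matrix_vector_mult)
  then show ?thesis
    by (simp add: ab weyl_weyl_self vert_chi)
qed

lemma L_orbit_vert: "L_orbit (vert x) = {vert (weyl a b *v x) | a b. True}"
proof -
  have "vert (M *v x) \<in> {vert (weyl a b *v x) | a b. True}" if M: "M \<in> Pauli3" for M
  proof -
    obtain a b where "\<And>x. vert (M *v x) = vert (weyl a b *v x)"
      using Pauli3_vert_weyl[OF M] by blast
    then show ?thesis
      by blast
  qed
  moreover have "vert (weyl a b *v x) \<in> L_orbit (vert x)" for a b
    using weyl_Pauli3[of a b] unfolding L_orbit_def sigma_vert
    by (metis (mono_tags, lifting) mem_Collect_eq scaleR_matrix_vector_assoc vert_sign)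
  ultimately show ?thesis
    unfolding L_orbit_def sigma_vert by blast
qed

lemma L_orbit_weyl: "L_orbit (vert (weyl a b *v x)) = L_orbit (vert x)"
  unfolding L_orbit_vert
proof (intro equalityI subsetI)
  fix k
  assume "k \<in> {vert (weyl c d *v (weyl a b *v x)) | c d. True}"
  then obtain c d where "k = vert (weyl (c \<oplus> a) (d \<oplus> b) *v x)"
    by (auto simp: vert_weyl_weyl)
  then show "k \<in> {vert (weyl c d *v x) | c d. True}"
    by blast
next
  fix k
  assume "k \<in> {vert (weyl c d *v x) | c d. True}"
  then obtain c d where "k = vert (weyl (c \<oplus> a) (d \<oplus> b) *v (weyl a b *v x))"
    by (auto simp: vert_weyl_weyl bxor_assoc)
  then show "k \<in> {vert (weyl c d *v (weyl a b *v x)) | c d. True}"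
    by blast
qed

lemma L_orbit_eq:
  assumes "k \<in> L_orbit (vert x)"
  shows "L_orbit k = L_orbit (vert x)"
proof -
  obtain a b where "k = vert (weyl a b *v x)"
    using assms unfolding L_orbit_vert by blast
  then show ?thesis
    by (simp add: L_orbit_weyl)
qed

lemma vert_in_L_orbit: "vert x \<in> L_orbit (vert x)"
proof -
  have "weyl 0 0 *v x = x"
    by (simp add: vec_eq_iff)
  then show ?thesis
    unfolding L_orbit_vert by (metis (mono_tags, lifting) mem_Collect_eq)
qed

lemma L_orbit_sym: "k \<in> L_orbit (vert x) \<Longrightarrow> vert x \<in> L_orbit k"
  using L_orbit_eq vert_in_L_orbit by blast

lemma finite_L_orbit: "finite (L_orbit (vert x))"
proof -
  have "L_orbit (vert x) = (\<lambda>(a, b). vert (weyl a b *v x)) ` UNIV"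
    unfolding L_orbit_vert by auto
  then show ?thesis
    by simp
qed

lemma matrix_vector_mult_sum:
  fixes A :: "'k \<Rightarrow> real^'n^'m"
  shows "(\<Sum>k\<in>K. A k) *v v = (\<Sum>k\<in>K. A k *v v)"
  by (simp add: vec_eq_iff matrix_vector_mult_def sum_distrib_right sum.swap[of _ K])

lemma sum_outer_orthogonal_spanning:
  fixes f :: "'k \<Rightarrow> real^'n"
  assumes "finite K" and nonzero: "\<And>k. k \<in> K \<Longrightarrow> f k \<noteq> 0"
    and orth: "\<And>k k'. k \<in> K \<Longrightarrow> k' \<in> K \<Longrightarrow> k \<noteq> k' \<Longrightarrow> inner (f k) (f k') = 0"
    and spanning: "span (f ` K) = UNIV"
  shows "(\<Sum>k\<in>K. \<chi> i j. f k $ i * f k $ j / (norm (f k))\<^sup>2) = mat 1"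
proof -
  have "(\<Sum>k\<in>K. \<chi> i j. f k $ i * f k $ j / (norm (f k))\<^sup>2) *v v = v" for v
  proof -
    define c where "c k = inner (f k) v / (norm (f k))\<^sup>2" for k
    define r where "r = v - (\<Sum>k\<in>K. c k *\<^sub>R f k)"
    have outer: "(\<chi> i j. f k $ i * f k $ j / (norm (f k))\<^sup>2) *v v = c k *\<^sub>R f k" for k
      by (simp add: vec_eq_iff matrix_vector_mult_def c_def inner_vec_def sum_distrib_left
          sum_divide_distrib mult_ac)
    have "inner r (f j) = 0" if j: "j \<in> K" for j
    proof -
      have "inner (\<Sum>k\<in>K. c k *\<^sub>R f k) (f j) = (\<Sum>k\<in>K. if k = j then c j * inner (f j) (f j) else 0)"
        unfolding inner_sum_left by (rule sum.cong) (use orth j in auto)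
      also have "\<dots> = inner (f j) v"
        using \<open>finite K\<close> j nonzero[OF j] by (simp add: c_def power2_norm_eq_inner)
      also have "\<dots> = inner v (f j)"
        by (rule inner_commute)
      finally show ?thesis
        by (simp add: r_def inner_diff_left)
    qed
    then have "inner r r = 0"
      using orthogonal_to_span[of r "f ` K" r] spanning by (force simp: orthogonal_def inner_commute)
    then have "(\<Sum>k\<in>K. c k *\<^sub>R f k) = v"
      by (simp add: r_def)
    then show ?thesis
      by (simp add: matrix_vector_mult_sum outer)
  qed
  then show ?thesis
    by (simp add: matrix_eq)
qed

lemma sum_projC_orthogonal_spanning:
  fixes f :: "'k \<Rightarrow> real^8"
  assumes "finite K" "\<And>k. k \<in> K \<Longrightarrow> f k \<noteq> 0"
    "\<And>k k'. k \<in> K \<Longrightarrow> k' \<in> K \<Longrightarrow> k \<noteq> k' \<Longrightarrow> inner (f k) (f k') = 0"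
    "span (f ` K) = UNIV"
  shows "(\<Sum>k\<in>K. projC (f k)) = mat 1"
proof -
  have "(\<Sum>k\<in>K. projC (f k)) $ i $ j =
      complex_of_real ((\<Sum>k\<in>K. \<chi> i j. f k $ i * f k $ j / (norm (f k))\<^sup>2) $ i $ j)" for i j
    by (simp add: projC_def)
  then show ?thesis
    by (simp add: sum_outer_orthogonal_spanning[OF assms] vec_eq_iff mat_def)
qed

lemma is_projection_projC: "is_projection (projC x)"
proof -
  define n where "n = (norm x)\<^sup>2"
  have n: "(\<Sum>k\<in>UNIV. x $ k * x $ k) = n"
    by (simp add: n_def power2_norm_eq_inner inner_vec_def)
  have entry: "(\<Sum>k\<in>UNIV. x $ i * x $ k / n * (x $ k * x $ j / n)) = x $ i * x $ j / n" for i j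
  proof -
    have "(\<Sum>k\<in>UNIV. x $ i * x $ k / n * (x $ k * x $ j / n)) =
        x $ i * x $ j * (\<Sum>k\<in>UNIV. x $ k * x $ k) / (n * n)"
      by (simp add: sum_divide_distrib sum_distrib_left mult_ac)
    then show ?thesis
      unfolding n by (cases "n = 0") simp_all
  qed
  have "(projC x ** projC x) $ i $ j = projC x $ i $ j" for i j
  proof -
    have "(projC x ** projC x) $ i $ j =
        (\<Sum>k\<in>UNIV. complex_of_real (x $ i * x $ k / n) * complex_of_real (x $ k * x $ j / n))"
      by (simp only: matrix_matrix_mult_def projC_def vec_lambda_beta n_def[symmetric])
    also have "\<dots> = complex_of_real (\<Sum>k\<in>UNIV. x $ i * x $ k / n * (x $ k * x $ j / n))"
      by (simp only: of_real_mult[symmetric] of_real_sum[symmetric])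
    also have "\<dots> = projC x $ i $ j"
      by (simp only: entry) (simp only: projC_def vec_lambda_beta n_def)
    finally show ?thesis .
  qed
  then have "projC x ** projC x = projC x"
    by (simp add: vec_eq_iff)
  moreover have "adjointC (projC x) = projC x"
    by (simp add: vec_eq_iff adjointC_def projC_def mult.commute)
  ultimately show ?thesis
    by (simp add: is_projection_def)
qed

lemma is_projection_0: "is_projection 0"
  by (simp add: is_projection_def adjointC_def vec_eq_iff matrix_matrix_mult_def)

lemma eq_or_eq_neg_of_abs_inner_eq:
  fixes y z :: "'a::real_inner"
  assumes "norm z = norm y" "\<bar>inner y z\<bar> = (norm y)\<^sup>2"
  shows "z = y \<or> z = - y"
proof (cases "y = 0")
  case False
  have "\<bar>inner y z\<bar> = norm y * norm z"
    using assms by (simp add: power2_eq_square)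
  then have "norm y *\<^sub>R z = norm z *\<^sub>R y \<or> norm y *\<^sub>R z = - norm z *\<^sub>R y"
    by (simp only: norm_cauchy_schwarz_abs_eq)
  then have "norm y *\<^sub>R z = norm y *\<^sub>R y \<or> norm y *\<^sub>R z = norm y *\<^sub>R (- y)"
    using assms(1) by simp
  then show ?thesis
    using False by (metis scaleR_cancel_left norm_eq_zero)
qed (use assms in simp)

lemma finite_vec_range:
  assumes "finite S"
  shows "finite {x :: 'a^'n. \<forall>i. x $ i \<in> S}"
proof -
  have "vec_nth ` {x :: 'a^'n. \<forall>i. x $ i \<in> S} \<subseteq> Pi\<^sub>E UNIV (\<lambda>_. S)"
    by (auto simp: PiE_def)
  moreover have "finite (Pi\<^sub>E (UNIV :: 'n set) (\<lambda>_. S))"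
    by (rule finite_PiE) (simp_all add: assms)
  ultimately have "finite (vec_nth ` {x :: 'a^'n. \<forall>i. x $ i \<in> S})"
    by (rule finite_subset)
  then show ?thesis
    by (rule finite_imageD) (simp add: inj_on_def vec_eq_iff)
qed

section \<open>Weyl operators on the roots of E8\<close>

lemma E8_root_pairI:
  "p \<noteq> q \<Longrightarrow> s \<in> {1, -1} \<Longrightarrow> t \<in> {1, -1} \<Longrightarrow> s *\<^sub>R axis p 1 + t *\<^sub>R axis q 1 \<in> E8_roots"
  unfolding E8_roots_def by blast

lemma E8_root_signsI: "(\<And>i. y $ i \<in> {1, -1}) \<Longrightarrow> (\<Prod>i\<in>UNIV. y $ i) = 1 \<Longrightarrow> y \<in> E8_roots"
  unfolding E8_roots_def by blast

lemma E8_roots_cases [consumes 1, case_names pair signs]: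
  assumes "y \<in> E8_roots"
  obtains (pair) p q s t where "p \<noteq> q" "s \<in> {1, -1}" "t \<in> {1, -1}"
    "y = s *\<^sub>R axis p 1 + t *\<^sub>R axis q 1"
  | (signs) "\<And>i. y $ i \<in> {1, -1}" "(\<Prod>i\<in>UNIV. y $ i) = 1"
  using assms unfolding E8_roots_def by blast

lemma E8_root_nonzero:
  assumes "y \<in> E8_roots"
  shows "y \<noteq> 0"
  using assms
proof (cases rule: E8_roots_cases)
  case (pair p q s t)
  then have "y $ p = s"
    by (simp add: axis_def)
  then show ?thesis
    using pair(2) by auto
next
  case signs
  then show ?thesis
    by (metis insert_iff singletonD zero_index zero_neq_neg_one zero_neq_one)
qed

lemma finite_E8_roots: "finite E8_roots"
proof -
  have "y $ i \<in> {-1, 0, 1}" if "y \<in> E8_roots" for y i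
    using that
  proof (cases rule: E8_roots_cases)
    case (pair p q s t)
    then show ?thesis
      by (cases "i = p"; cases "i = q") (auto simp: axis_def)
  qed auto
  then have "E8_roots \<subseteq> {y. \<forall>i. y $ i \<in> {-1, 0, 1}}"
    by blast
  moreover have "finite {y :: real^8. \<forall>i. y $ i \<in> {-1, 0, 1}}"
    by (rule finite_vec_range) simp
  ultimately show ?thesis
    by (rule finite_subset)
qed

lemma finite_E8_vertices: "finite E8_vertices"
  unfolding E8_vertices_def using finite_E8_roots by simp

lemma weyl_axis_pair:
  "weyl a b *v (s *\<^sub>R axis p 1 + t *\<^sub>R axis q 1) =
     (s * chi b (p \<oplus> a)) *\<^sub>R axis (p \<oplus> a) 1 + (t * chi b (q \<oplus> a)) *\<^sub>R axis (q \<oplus> a) 1"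
  by (auto simp: vec_eq_iff axis_def bxor_eq_iff algebra_simps)

lemma weyl_E8_root:
  assumes "y \<in> E8_roots"
  shows "weyl a b *v y \<in> E8_roots"
  using assms
proof (cases rule: E8_roots_cases)
  case (pair p q s t)
  have "p \<oplus> a \<noteq> q \<oplus> a"
    using pair(1) by (metis bxor_cancel)
  then show ?thesis
    unfolding pair(4) weyl_axis_pair
    by (intro E8_root_pairI sign_mult chi_sign pair(2,3))
next
  case signs
  have "(\<Prod>i\<in>UNIV. (weyl a b *v y) $ i) = (\<Prod>i\<in>UNIV. chi b i) * (\<Prod>i\<in>UNIV. y $ (i \<oplus> a))"
    by (simp add: prod.distrib)
  also have "\<dots> = 1"
    using prod.reindex_bij_betw[OF bij_bxor, of "\<lambda>i. y $ i"] signs(2) by (simp add: prod_chi)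
  finally show ?thesis
    by (intro E8_root_signsI) (simp_all only: weyl_mult_vec_nth sign_mult chi_sign signs(1))
qed

lemma L_orbit_subset_E8_vertices: "y \<in> E8_roots \<Longrightarrow> L_orbit (vert y) \<subseteq> E8_vertices"
  unfolding L_orbit_vert E8_vertices_def using weyl_E8_root by blast

lemma prod_coset_index_two:
  fixes y :: "8 \<Rightarrow> real"
  assumes sign: "\<And>i. y i \<in> {1, -1}" and prod: "(\<Prod>i\<in>UNIV. y i) = 1"
    and closed: "\<And>h h'. h \<in> H \<Longrightarrow> h' \<in> H \<Longrightarrow> h \<oplus> h' \<in> H" and card_H: "card H = 4"
  shows "prod y ((\<lambda>h. i \<oplus> h) ` H) = prod y H"
proof (cases "i \<in> H")
  case True
  have "(\<lambda>h. i \<oplus> h) ` H = H"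
  proof (intro equalityI subsetI)
    fix h
    assume "h \<in> H"
    then have "i \<oplus> h \<in> H" "h = i \<oplus> (i \<oplus> h)"
      using closed[OF True] by simp_all
    then show "h \<in> (\<lambda>h. i \<oplus> h) ` H"
      by blast
  qed (use closed True in blast)
  then show ?thesis
    by simp
next
  case False
  have "i \<oplus> h \<notin> H" if "h \<in> H" for h
    using closed[OF _ that, of "i \<oplus> h"] False by auto
  then have disjoint: "(\<lambda>h. i \<oplus> h) ` H \<inter> H = {}"
    by blast
  have "card ((\<lambda>h. i \<oplus> h) ` H) = 4"
    using card_H by (simp add: card_image inj_on_bxor)
  then have "card ((\<lambda>h. i \<oplus> h) ` H \<union> H) = card (UNIV :: 8 set)"
    using disjoint card_H by (simp add: card_Un_disjoint)
  then have "(\<lambda>h. i \<oplus> h) ` H \<union> H = UNIV"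
    by (simp add: card_subset_eq)
  then have "prod y ((\<lambda>h. i \<oplus> h) ` H) * prod y H = 1"
    using prod disjoint by (simp add: prod.union_disjoint[symmetric])
  moreover have "prod y H \<in> {1, -1}"
    using card_H by (intro prod_sign sign) (simp add: card_ge_0_finite)
  ultimately show ?thesis
    by auto
qed

lemma second_difference_const:
  fixes y :: "8 \<Rightarrow> real"
  assumes sign: "\<And>i. y i \<in> {1, -1}" and prod: "(\<Prod>i\<in>UNIV. y i) = 1"
  shows "y i * y (i \<oplus> a) * y (i \<oplus> c) * y (i \<oplus> a \<oplus> c) = y 0 * y a * y c * y (a \<oplus> c)"
proof (cases "a = 0 \<or> c = 0 \<or> a = c")
  case True
  have sq: "y j * y j = 1" "y j * (y j * z) = z" for j z
    using sign[of j] by auto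
  from True show ?thesis
    by (elim disjE) (simp_all add: sq mult_ac bxor_ac)
next
  case False
  (* {0, a, c, a \<oplus> c} is a subgroup of index two and the factors range over one of its cosets *)
  define H where "H = {0, a, c, a \<oplus> c}"
  have distinct: "a \<noteq> 0" "c \<noteq> 0" "a \<noteq> c" "a \<oplus> c \<noteq> 0" "a \<oplus> c \<noteq> a" "a \<oplus> c \<noteq> c"
    using False by (metis bxor_0 bxor_eq_iff bxor_fixed_iff bxor_commute)+
  have coset: "prod y ((\<lambda>h. j \<oplus> h) ` H) = y j * y (j \<oplus> a) * y (j \<oplus> c) * y (j \<oplus> a \<oplus> c)" for j
  proof -
    have "prod y ((\<lambda>h. j \<oplus> h) ` H) = (\<Prod>h\<in>H. y (j \<oplus> h))"
      by (simp add: prod.reindex inj_on_bxor)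
    then show ?thesis
      using distinct by (simp add: H_def bxor_assoc mult_ac)
  qed
  have closed: "h \<oplus> h' \<in> H" if "h \<in> H" "h' \<in> H" for h h'
    using that by (auto simp: H_def bxor_ac)
  have "card H = 4"
    using distinct by (simp add: H_def)
  then have "prod y ((\<lambda>h. i \<oplus> h) ` H) = prod y ((\<lambda>h. 0 \<oplus> h) ` H)"
    using prod_coset_index_two[OF sign prod closed] by simp
  then show ?thesis
    by (simp only: coset) simp
qed

lemma sum_sign_shift_eigenfunction:
  fixes g :: "8 \<Rightarrow> real"
  assumes sign: "\<And>i. g i \<in> {1, -1}" and shift: "\<And>c. \<exists>\<kappa>. \<forall>i. g (i \<oplus> c) = \<kappa> * g i"
  shows "sum g UNIV \<in> {0, 8, -8}"
proof (cases "\<forall>c. g c = g 0")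
  case True
  then have "sum g UNIV = (\<Sum>c::8\<in>UNIV. g 0)"
    by (intro sum.cong) simp_all
  then show ?thesis
    using sign[of 0] by auto
next
  case False
  then obtain c \<kappa> where c: "g c \<noteq> g 0" and \<kappa>: "\<And>i. g (i \<oplus> c) = \<kappa> * g i"
    using shift by blast
  have "\<kappa> = -1"
    using \<kappa>[of 0] c sign[of 0] sign[of c] by auto
  have "sum g UNIV = (\<Sum>i\<in>UNIV. g (i \<oplus> c))"
    using sum.reindex_bij_betw[OF bij_bxor, of g] by simp
  also have "\<dots> = - sum g UNIV"
    by (simp add: \<kappa> \<open>\<kappa> = -1\<close> sum_negf)
  finally show ?thesis
    by simp
qed

lemma sum_chi_shift_product:
  fixes y :: "8 \<Rightarrow> real"
  assumes sign: "\<And>i. y i \<in> {1, -1}" and prod: "(\<Prod>i\<in>UNIV. y i) = 1"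
  shows "(\<Sum>i\<in>UNIV. chi b i * y i * y (i \<oplus> a)) \<in> {0, 8, -8}"
proof (rule sum_sign_shift_eigenfunction)
  define g where "g i = chi b i * y i * y (i \<oplus> a)" for i
  have g_sign: "g i \<in> {1, -1}" for i
    unfolding g_def by (intro sign_mult chi_sign sign)
  then show "chi b i * y i * y (i \<oplus> a) \<in> {1, -1}" for i
    by (simp add: g_def)
  have "g (i \<oplus> c) = (chi b c * (y 0 * y a * y c * y (a \<oplus> c))) * g i" for c i
  proof -
    have "g (i \<oplus> c) * g i =
        chi b c * (chi b i * chi b i) * (y i * y (i \<oplus> a) * y (i \<oplus> c) * y (i \<oplus> a \<oplus> c))"
      by (simp add: g_def chi_bxor bxor_ac mult_ac)
    also have "\<dots> = chi b c * (y 0 * y a * y c * y (a \<oplus> c))"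
      using second_difference_const[OF sign prod, of i a c] by simp
    finally show ?thesis
      using g_sign[of i] by auto
  qed
  then show "\<exists>\<kappa>. \<forall>i. chi b (i \<oplus> c) * y (i \<oplus> c) * y (i \<oplus> c \<oplus> a) = \<kappa> * (chi b i * y i * y (i \<oplus> a))"
    for c
    unfolding g_def by blast
qed

lemma inner_weyl_axis_pair:
  assumes "p \<noteq> q" and st: "s \<in> {1, -1}" "t \<in> {1, -1}"
  defines "y \<equiv> s *\<^sub>R axis p 1 + t *\<^sub>R axis q (1::real)"
  shows "inner y (weyl a b *v y) \<in> {0, 2, -2}"
proof -
  have y_nth: "y $ j = (if j = p then s else 0) + (if j = q then t else 0)" for j
    by (simp add: y_def axis_def)
  have "inner y (weyl a b *v y) = s * chi b p * y $ (p \<oplus> a) + t * chi b q * y $ (q \<oplus> a)"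
    by (simp add: y_def inner_add_left inner_axis' mult.assoc)
  moreover have "chi b p \<in> {1, -1}" "chi b q \<in> {1, -1}"
    by (rule chi_sign)+
  moreover consider "a = 0" | "a \<noteq> 0" "p \<oplus> a = q" | "a \<noteq> 0" "p \<oplus> a \<noteq> q"
    by blast
  then have "(y $ (p \<oplus> a) = s \<and> y $ (q \<oplus> a) = t) \<or> (y $ (p \<oplus> a) = t \<and> y $ (q \<oplus> a) = s) \<or>
      (y $ (p \<oplus> a) = 0 \<and> y $ (q \<oplus> a) = 0)"
    using assms(1) by cases (auto simp: y_nth bxor_eq_iff)
  ultimately show ?thesis
    using st by auto
qed

lemma weyl_E8_root_fixed_or_orthogonal:
  assumes "y \<in> E8_roots"
  shows "vert (weyl a b *v y) = vert y \<or> inner y (weyl a b *v y) = 0"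
proof -
  have "inner y (weyl a b *v y) \<in> {0, (norm y)\<^sup>2, - (norm y)\<^sup>2}"
    using assms
  proof (cases rule: E8_roots_cases)
    case (pair p q s t)
    then have "(norm y)\<^sup>2 = 2"
      by (auto simp: power2_norm_eq_inner inner_add_left inner_add_right inner_axis_axis)
    then show ?thesis
      using inner_weyl_axis_pair[OF pair(1-3), of a b] pair(4) by simp
  next
    case signs
    have "y $ i * y $ i = 1" for i
      using signs(1)[of i] by auto
    then have "(norm y)\<^sup>2 = 8"
      by (simp add: power2_norm_eq_inner inner_vec_def)
    moreover have "inner y (weyl a b *v y) = (\<Sum>i\<in>UNIV. chi b i * y $ i * y $ (i \<oplus> a))"
      by (simp add: inner_vec_def mult_ac)
    ultimately show ?thesis
      using sum_chi_shift_product[of "\<lambda>i. y $ i", OF signs] by simp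
  qed
  then have "inner y (weyl a b *v y) = 0 \<or> \<bar>inner y (weyl a b *v y)\<bar> = (norm y)\<^sup>2"
    by auto
  then show ?thesis
    using eq_or_eq_neg_of_abs_inner_eq[OF norm_weyl] by (auto simp: vert_eq_iff)
qed

lemma weyl_orbit_same_or_orthogonal:
  assumes "y \<in> E8_roots"
  shows "vert (weyl a b *v y) = vert (weyl a' b' *v y) \<or> inner (weyl a b *v y) (weyl a' b' *v y) = 0"
proof -
  have "inner (weyl a b *v y) (weyl a' b' *v y) =
      inner (weyl a b *v (weyl a b *v y)) (weyl a b *v (weyl a' b' *v y))"
    by (rule inner_weyl[symmetric])
  also have "\<dots> = chi b a * chi b' a * inner y (weyl (a \<oplus> a') (b \<oplus> b') *v y)"
    by (simp add: weyl_weyl_self weyl_weyl)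
  finally have inner: "inner (weyl a b *v y) (weyl a' b' *v y) =
      chi b a * chi b' a * inner y (weyl (a \<oplus> a') (b \<oplus> b') *v y)" .
  show ?thesis
    using weyl_E8_root_fixed_or_orthogonal[OF assms, of "a \<oplus> a'" "b \<oplus> b'"]
  proof
    assume "vert (weyl (a \<oplus> a') (b \<oplus> b') *v y) = vert y"
    then have "vert (weyl a b *v (weyl a' b' *v y)) = vert (weyl a b *v (weyl a b *v y))"
      by (simp add: vert_weyl_weyl weyl_weyl_self vert_chi)
    then show ?thesis
      by (simp add: vert_weyl_inject)
  qed (simp add: inner)
qed

section \<open>Orbit sums\<close>

lemma span_L_orbit_representatives:
  assumes "w \<noteq> 0" and f: "\<And>k. k \<in> L_orbit (vert w) \<Longrightarrow> vert (f k) = k"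
  shows "span (f ` L_orbit (vert w)) = UNIV"
proof -
  have "{weyl a b *v w | a b. True} \<subseteq> span (f ` L_orbit (vert w))"
  proof clarify
    fix a b
    have k: "vert (weyl a b *v w) \<in> L_orbit (vert w)"
      by (auto simp: L_orbit_vert)
    then have "f (vert (weyl a b *v w)) \<in> span (f ` L_orbit (vert w))"
      by (intro span_base imageI)
    moreover have "weyl a b *v w = f (vert (weyl a b *v w)) \<or> weyl a b *v w = - f (vert (weyl a b *v w))"
      using f[OF k] by (auto simp: vert_eq_iff)
    ultimately show "weyl a b *v w \<in> span (f ` L_orbit (vert w))"
      by (metis span_neg)
  qed
  then have "span {weyl a b *v w | a b. True} \<subseteq> span (f ` L_orbit (vert w))"
    by (rule span_minimal) (rule subspace_span)
  then show ?thesis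
    using span_weyl_orbit[OF assms(1)] by auto
qed

lemma sum_projC_L_orbit:
  assumes w: "w \<in> E8_roots" and f: "\<And>k. k \<in> L_orbit (vert w) \<Longrightarrow> vert (f k) = k"
  shows "(\<Sum>k\<in>L_orbit (vert w). projC (f k)) = mat 1"
proof (rule sum_projC_orthogonal_spanning)
  have f_weyl: "f (vert (weyl a b *v w)) = weyl a b *v w \<or> f (vert (weyl a b *v w)) = - (weyl a b *v w)"
    for a b
    using f[of "vert (weyl a b *v w)"] by (auto simp: L_orbit_vert vert_eq_iff)
  show "finite (L_orbit (vert w))"
    by (rule finite_L_orbit)
  show "f k \<noteq> 0" if k: "k \<in> L_orbit (vert w)" for k
  proof -
    obtain a b where "k = vert (weyl a b *v w)"
      using k unfolding L_orbit_vert by blast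
    then have "norm (f k) = norm w"
      using f_weyl[of a b] by (auto simp: norm_weyl)
    then show ?thesis
      using E8_root_nonzero[OF w] by auto
  qed
  show "inner (f k) (f k') = 0"
    if kk': "k \<in> L_orbit (vert w)" "k' \<in> L_orbit (vert w)" "k \<noteq> k'" for k k'
  proof -
    obtain a b a' b' where k: "k = vert (weyl a b *v w)" "k' = vert (weyl a' b' *v w)"
      using kk'(1,2) unfolding L_orbit_vert by blast
    then have "inner (weyl a b *v w) (weyl a' b' *v w) = 0"
      using weyl_orbit_same_or_orthogonal[OF w, of a b a' b'] kk'(3) by auto
    then show ?thesis
      using f_weyl[of a b] f_weyl[of a' b'] k by auto
  qed
  show "span (f ` L_orbit (vert w)) = UNIV"
    using span_L_orbit_representatives[OF E8_root_nonzero[OF w]] f by blast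
qed

lemma sum_projC_L_orbit_permuted:
  assumes x: "x \<in> E8_roots" and w: "w \<in> E8_roots" "vert w \<in> L_orbit (vert x)"
    and B: "\<And>k. k \<in> L_orbit (vert x) \<Longrightarrow> B k \<in> Pauli3 \<and> vert (B k *v x) = k"
  shows "(\<Sum>k\<in>L_orbit (vert x). projC (B k *v w)) = mat 1"
proof -
  obtain c d where wcd: "vert w = vert (weyl c d *v x)"
    using w(2) by (auto simp: L_orbit_vert)
  define \<tau> where "\<tau> = sigma (weyl c d)"
  have \<tau>_weyl: "\<tau> (vert (weyl a b *v x)) = vert (weyl (c \<oplus> a) (d \<oplus> b) *v x)" for a b
    by (simp add: \<tau>_def sigma_vert vert_weyl_weyl)
  have \<tau>_maps: "\<tau> k \<in> L_orbit (vert x)" if "k \<in> L_orbit (vert x)" for k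
    using that by (auto simp: L_orbit_vert \<tau>_weyl; blast)
  have \<tau>_\<tau>: "\<tau> (\<tau> k) = k" if "k \<in> L_orbit (vert x)" for k
    using that by (auto simp: L_orbit_vert \<tau>_weyl bxor_assoc[symmetric])
  have \<tau>_B: "vert (B k *v w) = \<tau> k" if k: "k \<in> L_orbit (vert x)" for k
  proof -
    obtain a b where ab: "\<And>v. vert (B k *v v) = vert (weyl a b *v v)"
      using Pauli3_vert_weyl B[OF k] by blast
    have "vert (B k *v w) = vert (weyl a b *v (weyl c d *v x))"
      using ab wcd by (metis vert_matrix_vector_mult)
    also have "\<dots> = vert (weyl c d *v (weyl a b *v x))"
      by (rule vert_weyl_commute)
    also have "\<dots> = \<tau> k"
      using B[OF k] ab by (metis \<tau>_def sigma_vert)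
    finally show ?thesis .
  qed
  have bij: "bij_betw \<tau> (L_orbit (vert x)) (L_orbit (vert x))"
    by (rule bij_betw_byWitness[of _ \<tau>]) (use \<tau>_maps \<tau>_\<tau> in auto)
  have "(\<Sum>k\<in>L_orbit (vert x). projC (B k *v w)) = (\<Sum>k\<in>L_orbit (vert x). projC (B (\<tau> (\<tau> k)) *v w))"
    by (rule sum.cong) (simp_all add: \<tau>_\<tau>)
  also have "\<dots> = (\<Sum>k\<in>L_orbit (vert x). projC (B (\<tau> k) *v w))"
    by (rule sum.reindex_bij_betw[OF bij, of "\<lambda>k. projC (B (\<tau> k) *v w)"])
  also have "\<dots> = mat 1"
    using sum_projC_L_orbit[OF w(1), of "\<lambda>k. B (\<tau> k) *v w"] \<tau>_B \<tau>_maps \<tau>_\<tau>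
    by (simp add: L_orbit_eq[OF w(2)])
  finally show ?thesis .
qed

lemma sum_E8_vertices_L_orbit:
  assumes "y \<in> E8_roots"
  shows "(\<Sum>k\<in>E8_vertices. if k \<in> L_orbit (vert y) then F k else 0) = (\<Sum>k\<in>L_orbit (vert y). F k)"
  using sum.inter_restrict[OF finite_E8_vertices, of F "L_orbit (vert y)"]
    L_orbit_subset_E8_vertices[OF assms] by (simp add: Int_absorb1)

lemma row_sum_E8_vertices:
  assumes y: "y \<in> E8_roots" and w: "w \<in> E8_roots" "vert w \<in> L_orbit (vert y)"
    and B: "\<And>z. z \<in> E8_roots \<Longrightarrow> vert z \<in> L_orbit (vert y) \<Longrightarrow>
      B (vert z) \<in> Pauli3 \<and> vert (B (vert z) *v y) = vert z"
  shows "(\<Sum>k\<in>E8_vertices. if k \<in> L_orbit (vert y) then projC (B k *v w) else 0) = mat 1"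
proof -
  have "B k \<in> Pauli3 \<and> vert (B k *v y) = k" if "k \<in> L_orbit (vert y)" for k
    using L_orbit_subset_E8_vertices[OF y] that B unfolding E8_vertices_def by blast
  then show ?thesis
    by (simp add: sum_E8_vertices_L_orbit[OF y] sum_projC_L_orbit_permuted[OF y w])
qed

lemma column_sum_E8_vertices:
  assumes z: "z \<in> E8_roots"
    and W: "W (L_orbit (vert z)) \<in> E8_roots" "vert (W (L_orbit (vert z))) \<in> L_orbit (vert z)"
    and B: "\<And>y. y \<in> E8_roots \<Longrightarrow> vert z \<in> L_orbit (vert y) \<Longrightarrow>
      B (vert y) \<in> Pauli3 \<and> vert (B (vert y) *v y) = vert z"
  shows "(\<Sum>k\<in>E8_vertices. if vert z \<in> L_orbit k then projC (B k *v W (L_orbit k)) else 0) = mat 1"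
proof -
  have "(if vert z \<in> L_orbit k then projC (B k *v W (L_orbit k)) else 0) =
      (if k \<in> L_orbit (vert z) then projC (B k *v W (L_orbit (vert z))) else 0)"
    if "k \<in> E8_vertices" for k
  proof -
    obtain y where y: "k = vert y"
      using \<open>k \<in> E8_vertices\<close> unfolding E8_vertices_def by blast
    have "vert z \<in> L_orbit (vert y) \<longleftrightarrow> vert y \<in> L_orbit (vert z)"
      using L_orbit_sym by blast
    moreover have "L_orbit (vert y) = L_orbit (vert z)" if "vert z \<in> L_orbit (vert y)"
      using L_orbit_eq[OF that] by simp
    ultimately show ?thesis
      unfolding y by (cases "vert z \<in> L_orbit (vert y)") simp_all
  qed
  moreover have "B k \<in> Pauli3 \<and> vert (B k *v z) = k" if k: "k \<in> L_orbit (vert z)" for k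
  proof -
    obtain y where y: "y \<in> E8_roots" "k = vert y"
      using L_orbit_subset_E8_vertices[OF z] k unfolding E8_vertices_def by blast
    then have "B k \<in> Pauli3" "vert (B k *v y) = vert z"
      using B[OF y(1) L_orbit_sym[OF k, unfolded y(2)]] by simp_all
    then show ?thesis
      using Pauli3_vert_swap y(2) by blast
  qed
  ultimately show ?thesis
    using W by (simp add: sum_E8_vertices_L_orbit[OF z] sum_projC_L_orbit_permuted[OF z])
qed

lemma ball_E8_vertices: "(\<forall>v\<in>E8_vertices. P v) \<longleftrightarrow> (\<forall>y\<in>E8_roots. P (vert y))"
  by (simp add: E8_vertices_def)

theorem lemma3p5:
  fixes w :: "(real^8) set set \<Rightarrow> real^8"
    and Mc :: "(real^8) set \<Rightarrow> (real^8) set \<Rightarrow> real^8^8"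
    and u :: "(real^8) set \<Rightarrow> (real^8) set \<Rightarrow> complex^8^8"
  assumes w_choice: "\<And>Vi. Vi \<in> L_orbits \<Longrightarrow> w Vi \<in> E8_roots \<and> vert (w Vi) \<in> Vi"
    and M_choice: "\<And>y z. y \<in> E8_roots \<Longrightarrow> z \<in> E8_roots \<Longrightarrow> vert z \<in> L_orbit (vert y) \<Longrightarrow>
          Mc (vert y) (vert z) \<in> Pauli3 \<and>
          (Mc (vert y) (vert z) *v y = z \<or> Mc (vert y) (vert z) *v y = - z)"
    and u_def: "\<And>v v'. u v v' =
          (if v' \<in> L_orbit v then projC (Mc v v' *v w (L_orbit v)) else 0)"
  shows "quantum_permutation_matrix E8_vertices u"
proof -
  have w: "w (L_orbit (vert y)) \<in> E8_roots \<and> vert (w (L_orbit (vert y))) \<in> L_orbit (vert y)"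
    if "y \<in> E8_roots" for y
    using w_choice that unfolding L_orbits_def E8_vertices_def by blast
  have Mc: "Mc (vert y) (vert z) \<in> Pauli3 \<and> vert (Mc (vert y) (vert z) *v y) = vert z"
    if "y \<in> E8_roots" "z \<in> E8_roots" "vert z \<in> L_orbit (vert y)" for y z
    using M_choice[OF that] vert_eq_iff by blast
  have "(\<Sum>k\<in>E8_vertices. u (vert y) k) = mat 1" if y: "y \<in> E8_roots" for y
    unfolding u_def using w[OF y] Mc[OF y] by (intro row_sum_E8_vertices[OF y]) auto
  moreover have "(\<Sum>k\<in>E8_vertices. u k (vert z)) = mat 1" if z: "z \<in> E8_roots" for z
    unfolding u_def using w[OF z] Mc[OF _ z] by (intro column_sum_E8_vertices[OF z]) auto
  moreover have "is_projection (u v v')" for v v'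
    by (simp add: u_def is_projection_projC is_projection_0)
  ultimately show ?thesis
    unfolding quantum_permutation_matrix_def ball_E8_vertices by blast
qed

end
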